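(* Let $\mathbf p$ be an agreeable memory-one strategy for X with $p_2<1$. (a) If $\mathbf p$ is good, then whenever Y uses a memory-one strategy $\mathbf q$ that is not agreeable (with any initial plays), every associated limit distribution gives $s_Y<R$. (b) If $\mathbf p$ is not good, then for at least one of the two memory-one strategies $\mathbf q=(0,0,0,0)$ or $\mathbf q=(0,1,1,1)$ for Y, every associated limit distribution gives $s_Y\ge R$ and $s_X<R$. (c) If $\mathbf p$ is not of Nash type, then for at least one of the two memory-one strategies $\mathbf q=(0,0,0,0)$ or $\mathbf q=(0,1,1,1)$ for Y, every associated limit distribution gives $s_Y>R$ and $s_X<R$.
   Context: Iterated Prisoner's Dilemma: payoffs $T>R>P>S$ with $2R>T+S$; outcomes of a round are ordered $cc,cd,dc,dd$ (first letter X's play, second Y's; $c$ = cooperate, $d$ = defect); payoff vectors $\mathbf S_X=(R,S,T,P)$, $\mathbf S_Y=(R,T,S,P)$. A memory-one strategy for X is $\mathbf p=(p_1,p_2,p_3,p_4)\in[0,1]^4$, where $p_i$ is the probability that X plays $c$ in the next round given that the current round had the $i$-th outcome. A memory-one strategy for Y is $\mathbf q=(q_1,q_2,q_3,q_4)\in[0,1]^4$ where $q_1,q_2,q_3,q_4$ are the probabilities that Y plays $c$ after the outcomes $cc,dc,cd,dd$ respectively (i.e. indexed from Y's own perspective). A strategy pattern for Y is an arbitrary (possibly randomized and history-dependent) rule for Y's play in each round. Given initial plays and the rules used, let $\mathbf v^n$ be the probability distribution of the outcome of round $n$; a limit distribution is any limit point $\mathbf v$ of the Cesàro averages $\frac1n\sum_{k=1}^n\mathbf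 v^k$, and the associated expected payoffs are $s_X=\langle\mathbf v\cdot\mathbf S_X\rangle$, $s_Y=\langle\mathbf v\cdot\mathbf S_Y\rangle$. A strategy is agreeable if its first entry is $1$. $\mathbf p$ is of Nash type if it is agreeable and, for every strategy pattern of Y and every associated limit distribution, $s_Y\ge R$ implies $s_Y=R$. $\mathbf p$ is good if it is agreeable and, for every strategy pattern of Y and every associated limit distribution, $s_Y\ge R$ implies $s_Y=s_X=R$. *)

theory Defs
  imports Complex_Main
begin

text \<open>An outcome of a round is a pair (X cooperates?, Y cooperates?);
  True = c, False = d.  So cc = (True,True), cd = (True,False),
  dc = (False,True), dd = (False,False).\<close>
type_synonym outcome = "bool \<times> bool"

type_synonym mem1 = "real \<times> real \<times> real \<times> real"

definition valid_mem1 :: "mem1 \<Rightarrow> bool" where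
  "valid_mem1 p = (case p of (p1, p2, p3, p4) \<Rightarrow>
      0 \<le> p1 \<and> p1 \<le> 1 \<and> 0 \<le> p2 \<and> p2 \<le> 1 \<and> 0 \<le> p3 \<and> p3 \<le> 1 \<and> 0 \<le> p4 \<and> p4 \<le> 1)"

definition agreeable :: "mem1 \<Rightarrow> bool" where
  "agreeable p = (fst p = 1)"

fun pX :: "mem1 \<Rightarrow> outcome \<Rightarrow> real" where
  "pX (p1, p2, p3, p4) (x, y) =
     (if x then (if y then p1 else p2) else (if y then p3 else p4))"

text \<open>Y's memory-one strategy q=(q1,q2,q3,q4): probabilities after cc, dc, cd, dd from
  Y's own perspective (Y's play first), i.e. after X-first outcomes cc, cd... namely
  q2 is used when Y played c and X played d, q3 when Y played d and X played c.\<close>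
fun qY :: "mem1 \<Rightarrow> outcome \<Rightarrow> real" where
  "qY (q1, q2, q3, q4) (x, y) =
     (if y then (if x then q1 else q2) else (if x then q3 else q4))"

text \<open>A strategy pattern for Y: for each history (chronological list of past outcomes)
  the probability that Y cooperates in the next round.\<close>
definition valid_pattern :: "(outcome list \<Rightarrow> real) \<Rightarrow> bool" where
  "valid_pattern ys = (\<forall>h. 0 \<le> ys h \<and> ys h \<le> 1)"

definition mem1_pattern :: "bool \<Rightarrow> mem1 \<Rightarrow> outcome list \<Rightarrow> real" where
  "mem1_pattern y0 q h = (if h = [] then (if y0 then 1 else 0) else qY q (last h))"

definition step_prob :: "bool \<Rightarrow> mem1 \<Rightarrow> (outcome list \<Rightarrow> real) \<Rightarrow> outcome list \<Rightarrow> outcome \<Rightarrow> real" where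
  "step_prob x0 p ys h oc =
     (let a = (if h = [] then (if x0 then 1 else 0) else pX p (last h));
          b = ys h
      in (if fst oc then a else 1 - a) * (if snd oc then b else 1 - b))"

fun hist_prob_rev :: "bool \<Rightarrow> mem1 \<Rightarrow> (outcome list \<Rightarrow> real) \<Rightarrow> outcome list \<Rightarrow> real" where
  "hist_prob_rev x0 p ys [] = 1"
| "hist_prob_rev x0 p ys (oc # rh) = hist_prob_rev x0 p ys rh * step_prob x0 p ys (rev rh) oc"

definition hist_prob :: "bool \<Rightarrow> mem1 \<Rightarrow> (outcome list \<Rightarrow> real) \<Rightarrow> outcome list \<Rightarrow> real" where
  "hist_prob x0 p ys h = hist_prob_rev x0 p ys (rev h)"

text \<open>Distribution v^n of the outcome of round n (n \<ge> 1).\<close>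
definition round_dist :: "bool \<Rightarrow> mem1 \<Rightarrow> (outcome list \<Rightarrow> real) \<Rightarrow> nat \<Rightarrow> outcome \<Rightarrow> real" where
  "round_dist x0 p ys n oc =
     (\<Sum>h\<in>{h. length h = n \<and> h \<noteq> [] \<and> last h = oc}. hist_prob x0 p ys h)"

definition cesaro :: "bool \<Rightarrow> mem1 \<Rightarrow> (outcome list \<Rightarrow> real) \<Rightarrow> nat \<Rightarrow> outcome \<Rightarrow> real" where
  "cesaro x0 p ys n oc = (\<Sum>k=1..n. round_dist x0 p ys k oc) / real n"

definition limit_dist :: "bool \<Rightarrow> mem1 \<Rightarrow> (outcome list \<Rightarrow> real) \<Rightarrow> (outcome \<Rightarrow> real) \<Rightarrow> bool" where
  "limit_dist x0 p ys v =
     (\<exists>r. strict_mono r \<and> (\<forall>oc. (\<lambda>n. cesaro x0 p ys (r n) oc) \<longlonglongrightarrow> v oc))"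

definition sX :: "real \<Rightarrow> real \<Rightarrow> real \<Rightarrow> real \<Rightarrow> (outcome \<Rightarrow> real) \<Rightarrow> real" where
  "sX T R P S v = R * v (True, True) + S * v (True, False) + T * v (False, True) + P * v (False, False)"

definition sY :: "real \<Rightarrow> real \<Rightarrow> real \<Rightarrow> real \<Rightarrow> (outcome \<Rightarrow> real) \<Rightarrow> real" where
  "sY T R P S v = R * v (True, True) + T * v (True, False) + S * v (False, True) + P * v (False, False)"

definition nash_type :: "real \<Rightarrow> real \<Rightarrow> real \<Rightarrow> real \<Rightarrow> mem1 \<Rightarrow> bool" where
  "nash_type T R P S p = (agreeable p \<and>
     (\<forall>x0 ys v. valid_pattern ys \<longrightarrow> limit_dist x0 p ys v \<longrightarrow>
        sY T R P S v \<ge> R \<longrightarrow> sY T R P S v = R))"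

definition good :: "real \<Rightarrow> real \<Rightarrow> real \<Rightarrow> real \<Rightarrow> mem1 \<Rightarrow> bool" where
  "good T R P S p = (agreeable p \<and>
     (\<forall>x0 ys v. valid_pattern ys \<longrightarrow> limit_dist x0 p ys v \<longrightarrow>
        sY T R P S v \<ge> R \<longrightarrow> sY T R P S v = R \<and> sX T R P S v = R))"

end

theory Submission imports Defs begin

text \<open>Every limit distribution v of an agreeable p = (1,p2,p3,p4) is invariant under X's rule,
  which amounts to Akin's identity (1 - p2) v_cd = p3 v_dc + p4 v_dd. Substituting it into
  Y's payoff gives
    (1 - p2) (s_Y - R) = ((T-R) p3 - (R-S)(1-p2)) v_dc + ((T-R) p4 - (R-P)(1-p2)) v_dd,
  so p is good when both coefficients are negative and of Nash type when both are
  non-positive. If the dd coefficient is non-negative, Y exploits p by always defecting: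
  then only cd and dd occur. If the dc coefficient is non-negative, Y exploits p by
  (0,1,1,1): then dd never occurs and cc is as frequent as cd. In both cases v_cc < 1, and
  s_X + s_Y < 2R whenever v_cc < 1. Conversely, against a good p the only way for Y to
  reach R is v_cc = 1, which Y's own invariance forces to be q1 = 1.\<close>

section \<open>Histories and round distributions\<close>

abbreviation histories :: "nat \<Rightarrow> outcome list set" where
  "histories n \<equiv> {h. length h = n}"

lemma UNIV_outcome: "(UNIV :: outcome set) = {(True,True), (True,False), (False,True), (False,False)}"
  by auto

lemma sum_UNIV_outcome:
  "(\<Sum>oc\<in>UNIV. f oc) = f (True,True) + f (True,False) + f (False,True) + f (False,False)"
  for f :: "outcome \<Rightarrow> 'a::comm_monoid_add"
  by (simp add: UNIV_outcome add.assoc)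

lemma finite_histories: "finite (histories n)"
  using finite_lists_length_eq[of "UNIV :: outcome set" n] by simp

lemma histories_Suc: "histories (Suc n) = (\<lambda>(h, oc). h @ [oc]) ` (histories n \<times> UNIV)"
proof
  show "histories (Suc n) \<subseteq> (\<lambda>(h, oc). h @ [oc]) ` (histories n \<times> UNIV)"
  proof
    fix h assume h: "h \<in> histories (Suc n)"
    then have "h = butlast h @ [last h]" by (metis append_butlast_last_id length_0_conv
        mem_Collect_eq nat.distinct(1))
    moreover have "butlast h \<in> histories n" using h by simp
    ultimately show "h \<in> (\<lambda>(h, oc). h @ [oc]) ` (histories n \<times> UNIV)"
      by (metis (no_types, lifting) UNIV_I case_prod_conv image_eqI mem_Sigma_iff)
  qed
qed auto

lemma sum_histories_Suc:
  "(\<Sum>h\<in>histories (Suc n). F h) = (\<Sum>h\<in>histories n. \<Sum>oc\<in>UNIV. F (h @ [oc]))"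
proof -
  have "inj_on (\<lambda>(h, oc). h @ [oc]) (histories n \<times> (UNIV :: outcome set))"
    by (auto simp: inj_on_def)
  then have "(\<Sum>h\<in>histories (Suc n). F h) = (\<Sum>(h, oc)\<in>histories n \<times> UNIV. F (h @ [oc]))"
    unfolding histories_Suc by (simp add: sum.reindex split_def)
  then show ?thesis by (simp add: sum.cartesian_product)
qed

lemma hist_prob_Nil: "hist_prob x0 p ys [] = 1"
  by (simp add: hist_prob_def)

lemma hist_prob_snoc: "hist_prob x0 p ys (h @ [oc]) = hist_prob x0 p ys h * step_prob x0 p ys h oc"
  by (simp add: hist_prob_def)

lemma pX_bounds: "valid_mem1 p \<Longrightarrow> 0 \<le> pX p oc \<and> pX p oc \<le> 1"
  by (cases p; cases oc) (auto simp: valid_mem1_def)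

lemma qY_bounds: "valid_mem1 q \<Longrightarrow> 0 \<le> qY q oc \<and> qY q oc \<le> 1"
  by (cases q; cases oc) (auto simp: valid_mem1_def)

lemma valid_pattern_mem1_pattern: "valid_mem1 q \<Longrightarrow> valid_pattern (mem1_pattern y0 q)"
  using qY_bounds by (auto simp: valid_pattern_def mem1_pattern_def)

lemma step_prob_nonneg:
  assumes "valid_mem1 p" "valid_pattern ys"
  shows "0 \<le> step_prob x0 p ys h oc"
proof -
  define a where "a = (if h = [] then (if x0 then 1 else 0) else pX p (last h))"
  have "0 \<le> a" "a \<le> 1" using pX_bounds[OF assms(1)] by (auto simp: a_def)
  moreover have "0 \<le> ys h" "ys h \<le> 1" using assms(2) by (auto simp: valid_pattern_def)
  ultimately show ?thesis unfolding step_prob_def Let_def a_def[symmetric] by simp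
qed

lemma sum_step_prob: "(\<Sum>oc\<in>UNIV. step_prob x0 p ys h oc) = 1"
  by (simp add: sum_UNIV_outcome step_prob_def Let_def algebra_simps)

lemma hist_prob_nonneg:
  assumes "valid_mem1 p" "valid_pattern ys"
  shows "0 \<le> hist_prob x0 p ys h"
  by (induction h rule: rev_induct)
     (simp_all add: hist_prob_Nil hist_prob_snoc step_prob_nonneg[OF assms])

lemma sum_hist_prob: "(\<Sum>h\<in>histories n. hist_prob x0 p ys h) = 1"
proof (induction n)
  case 0
  have "histories 0 = {[]}" by auto
  then show ?case by (simp add: hist_prob_Nil)
next
  case (Suc n)
  then show ?case
    by (simp add: sum_histories_Suc hist_prob_snoc flip: sum_distrib_left)
       (simp add: sum_step_prob)
qed

lemma round_dist_eq_sum_histories: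
  "round_dist x0 p ys n oc =
     (\<Sum>h\<in>histories n. if h \<noteq> [] \<and> last h = oc then hist_prob x0 p ys h else 0)"
proof -
  have "{h. length h = n \<and> h \<noteq> [] \<and> last h = oc} = {h \<in> histories n. h \<noteq> [] \<and> last h = oc}"
    by auto
  then show ?thesis unfolding round_dist_def by (simp only: sum.inter_filter[OF finite_histories])
qed

lemma round_dist_nonneg:
  assumes "valid_mem1 p" "valid_pattern ys"
  shows "0 \<le> round_dist x0 p ys n oc"
  unfolding round_dist_eq_sum_histories by (auto intro!: sum_nonneg hist_prob_nonneg[OF assms])

lemma round_dist_le_1:
  assumes "valid_mem1 p" "valid_pattern ys"
  shows "round_dist x0 p ys n oc \<le> 1"
proof -
  have "round_dist x0 p ys n oc \<le> (\<Sum>h\<in>histories n. hist_prob x0 p ys h)"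
    unfolding round_dist_eq_sum_histories by (rule sum_mono) (auto intro: hist_prob_nonneg[OF assms])
  then show ?thesis by (simp add: sum_hist_prob)
qed

lemma round_dist_expectation:
  assumes "n \<ge> 1"
  shows "(\<Sum>oc\<in>UNIV. round_dist x0 p ys n oc * g oc) =
         (\<Sum>h\<in>histories n. hist_prob x0 p ys h * g (last h))"
proof -
  have "(\<Sum>oc\<in>UNIV. round_dist x0 p ys n oc * g oc) =
        (\<Sum>h\<in>histories n. \<Sum>oc\<in>UNIV. if h \<noteq> [] \<and> last h = oc then hist_prob x0 p ys h * g oc else 0)"
    unfolding round_dist_eq_sum_histories sum_distrib_right
    by (subst sum.swap) (intro sum.cong refl, simp)
  also have "\<dots> = (\<Sum>h\<in>histories n. hist_prob x0 p ys h * g (last h))"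
  proof (intro sum.cong refl)
    fix h assume "h \<in> histories n"
    with assms have "h \<noteq> []" by auto
    then show "(\<Sum>oc\<in>UNIV. if h \<noteq> [] \<and> last h = oc then hist_prob x0 p ys h * g oc else 0) =
               hist_prob x0 p ys h * g (last h)" by simp
  qed
  finally show ?thesis .
qed

lemma round_dist_expectation_Suc:
  "(\<Sum>oc\<in>UNIV. round_dist x0 p ys (Suc n) oc * G oc) =
   (\<Sum>h\<in>histories n. hist_prob x0 p ys h * (\<Sum>oc\<in>UNIV. step_prob x0 p ys h oc * G oc))"
  by (simp add: round_dist_expectation sum_histories_Suc hist_prob_snoc sum_distrib_left mult.assoc)

lemma sum_round_dist: "n \<ge> 1 \<Longrightarrow> (\<Sum>oc\<in>UNIV. round_dist x0 p ys n oc) = 1"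
  using round_dist_expectation[of n x0 p ys "\<lambda>_. 1"] by (simp add: sum_hist_prob)

lemma abs_round_dist_expectation_le:
  assumes "valid_mem1 p" "valid_pattern ys"
  shows "\<bar>\<Sum>oc\<in>UNIV. round_dist x0 p ys n oc * g oc\<bar> \<le> (\<Sum>oc\<in>UNIV. \<bar>g oc\<bar>)"
proof -
  have "\<bar>\<Sum>oc\<in>UNIV. round_dist x0 p ys n oc * g oc\<bar> \<le> (\<Sum>oc\<in>UNIV. round_dist x0 p ys n oc * \<bar>g oc\<bar>)"
    using sum_abs[of "\<lambda>oc. round_dist x0 p ys n oc * g oc" UNIV]
    by (simp add: abs_mult round_dist_nonneg[OF assms])
  also have "\<dots> \<le> (\<Sum>oc\<in>UNIV. \<bar>g oc\<bar>)"
    by (intro sum_mono mult_left_le_one_le) (simp_all add: round_dist_nonneg[OF assms] round_dist_le_1[OF assms])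
  finally show ?thesis .
qed

lemma cesaro_expectation:
  "(\<Sum>oc\<in>UNIV. cesaro x0 p ys n oc * g oc) =
   (\<Sum>k=1..n. \<Sum>oc\<in>UNIV. round_dist x0 p ys k oc * g oc) / real n"
proof -
  have "(\<Sum>oc\<in>UNIV. cesaro x0 p ys n oc * g oc) =
        (\<Sum>oc\<in>UNIV. \<Sum>k=1..n. round_dist x0 p ys k oc * g oc) / real n"
    unfolding cesaro_def by (simp add: sum_distrib_right sum_divide_distrib)
  then show ?thesis by (subst (asm) sum.swap)
qed

section \<open>Limit distributions\<close>

lemma bounded_over_n_LIMSEQ_0:
  fixes D :: "nat \<Rightarrow> real"
  assumes "\<And>n. \<bar>D n\<bar> \<le> B"
  shows "(\<lambda>n. D n / real n) \<longlonglongrightarrow> 0"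
proof (rule tendsto_0_le[OF lim_1_over_n, of _ B])
  show "\<forall>\<^sub>F n in sequentially. norm (D n / real n) \<le> norm (1 / real n) * B"
    using assms by (simp add: abs_divide divide_right_mono)
qed

lemma limit_dist_nonneg:
  assumes "valid_mem1 p" "valid_pattern ys" "limit_dist x0 p ys v"
  shows "0 \<le> v oc"
proof -
  obtain r where "(\<lambda>n. cesaro x0 p ys (r n) oc) \<longlonglongrightarrow> v oc"
    using assms(3) unfolding limit_dist_def by blast
  then show ?thesis
    by (rule LIMSEQ_le_const)
       (auto simp: cesaro_def intro!: divide_nonneg_nonneg sum_nonneg round_dist_nonneg[OF assms(1,2)])
qed

lemma sum_limit_dist:
  assumes "limit_dist x0 p ys v"
  shows "(\<Sum>oc\<in>UNIV. v oc) = 1"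
proof -
  obtain r where r: "strict_mono r" and conv: "\<And>oc. (\<lambda>n. cesaro x0 p ys (r n) oc) \<longlonglongrightarrow> v oc"
    using assms unfolding limit_dist_def by blast
  have "(\<Sum>oc\<in>UNIV. cesaro x0 p ys (r n) oc) = 1" if "n \<ge> 1" for n
  proof -
    have "r n \<ge> 1" using seq_suble[OF r, of n] that by linarith
    then show ?thesis
      using cesaro_expectation[of x0 p ys "r n" "\<lambda>_. 1"] by (simp add: sum_round_dist)
  qed
  then have "(\<lambda>n. \<Sum>oc\<in>UNIV. cesaro x0 p ys (r n) oc) \<longlonglongrightarrow> 1"
    by (intro tendsto_eventually eventually_sequentiallyI)
  moreover have "(\<lambda>n. \<Sum>oc\<in>UNIV. cesaro x0 p ys (r n) oc) \<longlonglongrightarrow> (\<Sum>oc\<in>UNIV. v oc)"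
    by (intro tendsto_sum conv)
  ultimately show ?thesis using LIMSEQ_unique by blast
qed

text \<open>The Cesaro averages of the two expectations differ by a telescoping sum divided by n.\<close>
lemma limit_dist_invariant:
  assumes p: "valid_mem1 p" and ys: "valid_pattern ys" and lim: "limit_dist x0 p ys v"
    and step: "\<And>h. h \<noteq> [] \<Longrightarrow> (\<Sum>oc\<in>UNIV. step_prob x0 p ys h oc * G oc) = H (last h)"
  shows "(\<Sum>oc\<in>UNIV. v oc * G oc) = (\<Sum>oc\<in>UNIV. v oc * H oc)"
proof -
  define E where "E g k = (\<Sum>oc\<in>UNIV. round_dist x0 p ys k oc * g oc)" for g k
  obtain r where r: "strict_mono r" and conv: "\<And>oc. (\<lambda>n. cesaro x0 p ys (r n) oc) \<longlonglongrightarrow> v oc"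
    using lim unfolding limit_dist_def by blast
  have shift: "E G (Suc k) = E H k" if "k \<ge> 1" for k
  proof -
    have "E G (Suc k) = (\<Sum>h\<in>histories k. hist_prob x0 p ys h * H (last h))"
      unfolding E_def round_dist_expectation_Suc
    proof (intro sum.cong refl)
      fix h assume "h \<in> histories k"
      with that have "h \<noteq> []" by auto
      then show "hist_prob x0 p ys h * (\<Sum>oc\<in>UNIV. step_prob x0 p ys h oc * G oc) =
                 hist_prob x0 p ys h * H (last h)" by (simp add: step)
    qed
    then show ?thesis unfolding E_def using round_dist_expectation[OF that] by simp
  qed
  define d where "d n = (\<Sum>oc\<in>UNIV. cesaro x0 p ys n oc * H oc) - (\<Sum>oc\<in>UNIV. cesaro x0 p ys n oc * G oc)"
    for n
  have d_eq: "d n = (E G (Suc n) - E G 1) / real n" if "n \<ge> 1" for n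
  proof -
    have "d n = (\<Sum>k=1..n. E G (Suc k) - E G k) / real n"
      unfolding d_def cesaro_expectation E_def[symmetric]
      by (simp add: shift sum_subtractf diff_divide_distrib)
    then show ?thesis using that by (simp add: sum_Suc_diff)
  qed
  have bound: "\<bar>E G k\<bar> \<le> (\<Sum>oc\<in>UNIV. \<bar>G oc\<bar>)" for k
    unfolding E_def by (rule abs_round_dist_expectation_le[OF p ys])
  have "\<bar>E G (Suc n) - E G 1\<bar> \<le> 2 * (\<Sum>oc\<in>UNIV. \<bar>G oc\<bar>)" for n
    using bound[of "Suc n"] bound[of 1] by linarith
  then have "(\<lambda>n. (E G (Suc n) - E G 1) / real n) \<longlonglongrightarrow> 0"
    by (rule bounded_over_n_LIMSEQ_0)
  then have "d \<longlonglongrightarrow> 0"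
    by (rule Lim_transform_eventually) (use d_eq in \<open>auto intro: eventually_sequentiallyI[of 1]\<close>)
  then have "(d \<circ> r) \<longlonglongrightarrow> 0" using LIMSEQ_subseq_LIMSEQ r by blast
  moreover have "(d \<circ> r) \<longlonglongrightarrow> (\<Sum>oc\<in>UNIV. v oc * H oc) - (\<Sum>oc\<in>UNIV. v oc * G oc)"
    unfolding comp_def d_def by (intro tendsto_diff tendsto_sum tendsto_mult_right conv)
  ultimately show ?thesis using LIMSEQ_unique by fastforce
qed

lemma limit_dist_X_cooperation:
  assumes "valid_mem1 p" "valid_pattern ys" "limit_dist x0 p ys v"
  shows "(\<Sum>oc\<in>UNIV. v oc * (if fst oc then 1 else 0)) = (\<Sum>oc\<in>UNIV. v oc * pX p oc)"
  by (rule limit_dist_invariant[OF assms])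
     (simp add: sum_UNIV_outcome step_prob_def Let_def algebra_simps)

lemma limit_dist_Y_cooperation:
  assumes "valid_mem1 p" "valid_mem1 q" "limit_dist x0 p (mem1_pattern y0 q) v"
  shows "(\<Sum>oc\<in>UNIV. v oc * (if snd oc then 1 else 0)) = (\<Sum>oc\<in>UNIV. v oc * qY q oc)"
  by (rule limit_dist_invariant[OF assms(1) valid_pattern_mem1_pattern[OF assms(2)] assms(3)])
     (simp add: sum_UNIV_outcome step_prob_def Let_def algebra_simps mem1_pattern_def)

lemma limit_dist_mutual_defection:
  assumes "valid_mem1 p" "valid_mem1 q" "limit_dist x0 p (mem1_pattern y0 q) v"
  shows "(\<Sum>oc\<in>UNIV. v oc * (if oc = (False, False) then 1 else 0)) =
         (\<Sum>oc\<in>UNIV. v oc * ((1 - pX p oc) * (1 - qY q oc)))"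
  by (rule limit_dist_invariant[OF assms(1) valid_pattern_mem1_pattern[OF assms(2)] assms(3)])
     (simp add: sum_UNIV_outcome step_prob_def Let_def algebra_simps mem1_pattern_def)

lemma limit_dist_coords:
  assumes "valid_mem1 p" "valid_pattern ys" "limit_dist x0 p ys v"
  shows "0 \<le> v (True, True)" "0 \<le> v (True, False)" "0 \<le> v (False, True)" "0 \<le> v (False, False)"
    and "v (True, True) + v (True, False) + v (False, True) + v (False, False) = 1"
  using limit_dist_nonneg[OF assms] sum_limit_dist[OF assms(3)] by (simp_all add: sum_UNIV_outcome)

section \<open>Payoffs against an agreeable strategy\<close>

lemma akin_identity:
  assumes "valid_mem1 (1, p2, p3, p4)" "valid_pattern ys" "limit_dist x0 (1, p2, p3, p4) ys v"
  shows "(1 - p2) * v (True, False) = p3 * v (False, True) + p4 * v (False, False)"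
  using limit_dist_X_cooperation[OF assms] by (simp add: sum_UNIV_outcome algebra_simps)

lemma sY_minus_R_eq:
  assumes "v (True, True) + v (True, False) + v (False, True) + v (False, False) = 1"
    and "(1 - p2) * v (True, False) = p3 * v (False, True) + p4 * v (False, False)"
  shows "(1 - p2) * (sY T R P S v - R) =
         ((T - R) * p3 - (R - S) * (1 - p2)) * v (False, True) +
         ((T - R) * p4 - (R - P) * (1 - p2)) * v (False, False)"
proof -
  have cc: "v (True, True) = 1 - v (True, False) - v (False, True) - v (False, False)"
    using assms(1) by linarith
  have "(1 - p2) * (sY T R P S v - R) =
        (T - R) * ((1 - p2) * v (True, False)) - (R - S) * (1 - p2) * v (False, True)
          - (R - P) * (1 - p2) * v (False, False)"
    unfolding sY_def cc by (simp add: algebra_simps)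
  then show ?thesis unfolding assms(2) by (simp add: algebra_simps)
qed

lemma sX_plus_sY_less:
  assumes "P < R" "T + S < 2 * R"
    and "v (True, True) + v (True, False) + v (False, True) + v (False, False) = 1"
    and "0 \<le> v (True, False)" "0 \<le> v (False, True)" "0 \<le> v (False, False)"
    and "v (True, True) < 1"
  shows "sX T R P S v + sY T R P S v < 2 * R"
proof -
  have cc: "v (True, True) = 1 - v (True, False) - v (False, True) - v (False, False)"
    using assms(3) by linarith
  have "sX T R P S v + sY T R P S v =
        2 * R - (2 * R - T - S) * (v (True, False) + v (False, True)) - 2 * (R - P) * v (False, False)"
    unfolding sX_def sY_def cc by (simp add: algebra_simps)
  moreover have "0 < (2 * R - T - S) * (v (True, False) + v (False, True)) + 2 * (R - P) * v (False, False)"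
  proof -
    have "0 < v (True, False) + v (False, True) \<or> 0 < v (False, False)"
      using assms(3-7) by linarith
    moreover have "0 \<le> (2 * R - T - S) * (v (True, False) + v (False, True))"
      "0 \<le> 2 * (R - P) * v (False, False)"
      using assms(1,2,4-6) by simp_all
    ultimately show ?thesis using assms(1,2) by (auto simp: add_pos_nonneg add_nonneg_pos)
  qed
  ultimately show ?thesis by linarith
qed

lemma good_if_coeffs_neg:
  assumes p: "valid_mem1 (1, p2, p3, p4)" and p2: "p2 < 1"
    and dc: "(T - R) * p3 - (R - S) * (1 - p2) < 0"
    and dd: "(T - R) * p4 - (R - P) * (1 - p2) < 0"
  shows "good T R P S (1, p2, p3, p4)"
  unfolding good_def agreeable_def
proof (intro conjI allI impI)
  fix x0 ys v assume ys: "valid_pattern ys" and lim: "limit_dist x0 (1, p2, p3, p4) ys v"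
    and ge: "R \<le> sY T R P S v"
  note v = limit_dist_coords[OF p ys lim] and akin = akin_identity[OF p ys lim]
  have "0 \<le> (1 - p2) * (sY T R P S v - R)" using ge p2 by simp
  then have "((T - R) * p3 - (R - S) * (1 - p2)) * v (False, True) +
             ((T - R) * p4 - (R - P) * (1 - p2)) * v (False, False) \<ge> 0"
    by (simp only: sY_minus_R_eq[OF v(5) akin])
  moreover have "((T - R) * p3 - (R - S) * (1 - p2)) * v (False, True) \<le> 0"
    "((T - R) * p4 - (R - P) * (1 - p2)) * v (False, False) \<le> 0"
    using dc dd v(3,4) by (simp_all add: mult_nonpos_nonneg)
  ultimately have "((T - R) * p3 - (R - S) * (1 - p2)) * v (False, True) = 0"
    "((T - R) * p4 - (R - P) * (1 - p2)) * v (False, False) = 0" by linarith+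
  then have "v (False, True) = 0" "v (False, False) = 0" using dc dd by simp_all
  moreover from this have "v (True, False) = 0" using akin p2 by simp
  ultimately show "sY T R P S v = R" "sX T R P S v = R"
    using v(5) by (simp_all add: sY_def sX_def)
qed simp

lemma nash_type_if_coeffs_nonpos:
  assumes p: "valid_mem1 (1, p2, p3, p4)" and p2: "p2 < 1"
    and dc: "(T - R) * p3 - (R - S) * (1 - p2) \<le> 0"
    and dd: "(T - R) * p4 - (R - P) * (1 - p2) \<le> 0"
  shows "nash_type T R P S (1, p2, p3, p4)"
  unfolding nash_type_def agreeable_def
proof (intro conjI allI impI)
  fix x0 ys v assume ys: "valid_pattern ys" and lim: "limit_dist x0 (1, p2, p3, p4) ys v"
    and ge: "R \<le> sY T R P S v"
  note v = limit_dist_coords[OF p ys lim]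
  have "((T - R) * p3 - (R - S) * (1 - p2)) * v (False, True) +
        ((T - R) * p4 - (R - P) * (1 - p2)) * v (False, False) \<le> 0"
    using dc dd v(3,4) by (simp add: add_nonpos_nonpos mult_nonpos_nonneg)
  then have "(1 - p2) * (sY T R P S v - R) \<le> 0"
    by (simp only: sY_minus_R_eq[OF v(5) akin_identity[OF p ys lim]])
  then show "sY T R P S v = R" using ge p2 by (simp add: mult_le_0_iff)
qed simp

lemma good_punishes_non_agreeable:
  assumes ord: "R > P" "2 * R > T + S"
    and good: "good T R P S p" and p: "valid_mem1 p" and q: "valid_mem1 q" "\<not> agreeable q"
    and lim: "limit_dist x0 p (mem1_pattern y0 q) v"
  shows "sY T R P S v < R"
proof (rule ccontr)
  assume "\<not> sY T R P S v < R"
  then have "R \<le> sY T R P S v" by simp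
  then have "sY T R P S v = R" "sX T R P S v = R"
    using good valid_pattern_mem1_pattern[OF q(1)] lim unfolding good_def by blast+
  note v = limit_dist_coords[OF p valid_pattern_mem1_pattern[OF q(1)] lim]
  have "\<not> v (True, True) < 1"
    using sX_plus_sY_less[OF ord(1) ord(2) v(5) v(2-4)] \<open>sY T R P S v = R\<close> \<open>sX T R P S v = R\<close>
    by linarith
  then have cc: "v (True, True) = 1" and "v (True, False) = 0" "v (False, True) = 0" "v (False, False) = 0"
    using v by linarith+
  obtain q1 q2 q3 q4 where q_eq: "q = (q1, q2, q3, q4)" by (cases q)
  have "q1 = 1"
    using limit_dist_Y_cooperation[OF p q(1) lim] cc \<open>v (True, False) = 0\<close> \<open>v (False, True) = 0\<close>
      \<open>v (False, False) = 0\<close> by (simp add: q_eq sum_UNIV_outcome)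
  then show False using q(2) by (simp add: q_eq agreeable_def)
qed

lemma payoffs_against_all_defect:
  assumes ord: "R > P" "2 * R > T + S" and p: "valid_mem1 (1, p2, p3, p4)" and p2: "p2 < 1"
    and lim: "limit_dist x0 (1, p2, p3, p4) (mem1_pattern y0 (0, 0, 0, 0)) v"
  shows "(1 - p2) * (sY T R P S v - R) = ((T - R) * p4 - (R - P) * (1 - p2)) * v (False, False)"
    and "0 < v (False, False)"
    and "sX T R P S v + sY T R P S v < 2 * R"
proof -
  have q: "valid_mem1 (0, 0, 0, 0)" by (simp add: valid_mem1_def)
  note ys = valid_pattern_mem1_pattern[OF q]
  note v = limit_dist_coords[OF p ys lim] and akin = akin_identity[OF p ys lim]
  have "v (True, True) + v (False, True) = 0"
    using limit_dist_Y_cooperation[OF p q lim] by (simp add: sum_UNIV_outcome)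
  then have cc: "v (True, True) = 0" and dc: "v (False, True) = 0" using v(1,3) by linarith+
  show "(1 - p2) * (sY T R P S v - R) = ((T - R) * p4 - (R - P) * (1 - p2)) * v (False, False)"
    using sY_minus_R_eq[OF v(5) akin] dc by simp
  show "0 < v (False, False)"
  proof (rule ccontr)
    assume "\<not> 0 < v (False, False)"
    then have "v (False, False) = 0" using v(4) by simp
    then show False using akin v(5) cc dc p2 by simp
  qed
  show "sX T R P S v + sY T R P S v < 2 * R"
    using sX_plus_sY_less[OF ord v(5) v(2-4)] cc by simp
qed

lemma payoffs_against_0111:
  assumes ord: "R > P" "2 * R > T + S" and p: "valid_mem1 (1, p2, p3, p4)" and p2: "p2 < 1"
    and lim: "limit_dist x0 (1, p2, p3, p4) (mem1_pattern y0 (0, 1, 1, 1)) v"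
  shows "(1 - p2) * (sY T R P S v - R) = ((T - R) * p3 - (R - S) * (1 - p2)) * v (False, True)"
    and "0 < v (False, True)"
    and "sX T R P S v + sY T R P S v < 2 * R"
proof -
  have q: "valid_mem1 (0, 1, 1, 1)" by (simp add: valid_mem1_def)
  note ys = valid_pattern_mem1_pattern[OF q]
  note v = limit_dist_coords[OF p ys lim] and akin = akin_identity[OF p ys lim]
  have dd: "v (False, False) = 0"
    using limit_dist_mutual_defection[OF p q lim] by (simp add: sum_UNIV_outcome)
  have "v (True, True) + v (False, True) = v (True, False) + v (False, True) + v (False, False)"
    using limit_dist_Y_cooperation[OF p q lim] by (simp add: sum_UNIV_outcome)
  then have cc_cd: "v (True, True) = v (True, False)" using dd by simp
  show "(1 - p2) * (sY T R P S v - R) = ((T - R) * p3 - (R - S) * (1 - p2)) * v (False, True)"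
    using sY_minus_R_eq[OF v(5) akin] dd by simp
  show "0 < v (False, True)"
  proof (rule ccontr)
    assume "\<not> 0 < v (False, True)"
    then have "v (False, True) = 0" using v(3) by simp
    then show False using akin v(5) cc_cd dd p2 by simp
  qed
  have "v (True, True) < 1" using v(3,5) dd cc_cd by linarith
  then show "sX T R P S v + sY T R P S v < 2 * R"
    using sX_plus_sY_less[OF ord v(5) v(2-4)] by simp
qed

lemma payoffs_by_coeff_sign:
  fixes c w :: real
  assumes eq: "(1 - p2) * (sY T R P S v - R) = c * w" and "0 < w" "p2 < 1"
    and sum: "sX T R P S v + sY T R P S v < 2 * R"
  shows "0 \<le> c \<Longrightarrow> R \<le> sY T R P S v \<and> sX T R P S v < R"
    and "0 < c \<Longrightarrow> R < sY T R P S v \<and> sX T R P S v < R"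
proof -
  assume "0 \<le> c"
  then have "0 \<le> (1 - p2) * (sY T R P S v - R)" unfolding eq using \<open>0 < w\<close> by simp
  then show "R \<le> sY T R P S v \<and> sX T R P S v < R"
    using \<open>p2 < 1\<close> sum by (simp add: zero_le_mult_iff)
next
  assume "0 < c"
  then have "0 < (1 - p2) * (sY T R P S v - R)" unfolding eq using \<open>0 < w\<close> by simp
  then show "R < sY T R P S v \<and> sX T R P S v < R"
    using \<open>p2 < 1\<close> sum by (simp add: zero_less_mult_iff)
qed

lemma not_good_exploitable:
  assumes ord: "R > P" "2 * R > T + S" and p: "valid_mem1 (1, p2, p3, p4)" and p2: "p2 < 1"
    and not_good: "\<not> good T R P S (1, p2, p3, p4)"
  shows "\<exists>q \<in> {(0, 0, 0, 0), (0, 1, 1, 1)}. \<forall>x0 y0 v.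
           limit_dist x0 (1, p2, p3, p4) (mem1_pattern y0 q) v \<longrightarrow>
           sY T R P S v \<ge> R \<and> sX T R P S v < R"
proof (cases "(T - R) * p4 - (R - P) * (1 - p2) < 0")
  case True
  then have dc: "0 \<le> (T - R) * p3 - (R - S) * (1 - p2)"
    using good_if_coeffs_neg[OF p p2] not_good by force
  show ?thesis
  proof (rule bexI[of _ "(0, 1, 1, 1)"], intro allI impI)
    fix x0 y0 v assume "limit_dist x0 (1, p2, p3, p4) (mem1_pattern y0 (0, 1, 1, 1)) v"
    note payoffs = payoffs_against_0111[OF ord p p2 this]
    show "sY T R P S v \<ge> R \<and> sX T R P S v < R"
      using payoffs_by_coeff_sign(1)[OF payoffs(1,2) p2 payoffs(3) dc] by simp
  qed simp
next
  case False
  then have dd: "0 \<le> (T - R) * p4 - (R - P) * (1 - p2)" by simp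
  show ?thesis
  proof (rule bexI[of _ "(0, 0, 0, 0)"], intro allI impI)
    fix x0 y0 v assume "limit_dist x0 (1, p2, p3, p4) (mem1_pattern y0 (0, 0, 0, 0)) v"
    note payoffs = payoffs_against_all_defect[OF ord p p2 this]
    show "sY T R P S v \<ge> R \<and> sX T R P S v < R"
      using payoffs_by_coeff_sign(1)[OF payoffs(1,2) p2 payoffs(3) dd] by simp
  qed simp
qed

lemma not_nash_type_exploitable:
  assumes ord: "R > P" "2 * R > T + S" and p: "valid_mem1 (1, p2, p3, p4)" and p2: "p2 < 1"
    and not_nash: "\<not> nash_type T R P S (1, p2, p3, p4)"
  shows "\<exists>q \<in> {(0, 0, 0, 0), (0, 1, 1, 1)}. \<forall>x0 y0 v.
           limit_dist x0 (1, p2, p3, p4) (mem1_pattern y0 q) v \<longrightarrow>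
           sY T R P S v > R \<and> sX T R P S v < R"
proof (cases "(T - R) * p4 - (R - P) * (1 - p2) \<le> 0")
  case True
  then have dc: "0 < (T - R) * p3 - (R - S) * (1 - p2)"
    using nash_type_if_coeffs_nonpos[OF p p2] not_nash by force
  show ?thesis
  proof (rule bexI[of _ "(0, 1, 1, 1)"], intro allI impI)
    fix x0 y0 v assume "limit_dist x0 (1, p2, p3, p4) (mem1_pattern y0 (0, 1, 1, 1)) v"
    note payoffs = payoffs_against_0111[OF ord p p2 this]
    show "sY T R P S v > R \<and> sX T R P S v < R"
      using payoffs_by_coeff_sign(2)[OF payoffs(1,2) p2 payoffs(3) dc] by simp
  qed simp
next
  case False
  then have dd: "0 < (T - R) * p4 - (R - P) * (1 - p2)" by simp
  show ?thesis
  proof (rule bexI[of _ "(0, 0, 0, 0)"], intro allI impI)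
    fix x0 y0 v assume "limit_dist x0 (1, p2, p3, p4) (mem1_pattern y0 (0, 0, 0, 0)) v"
    note payoffs = payoffs_against_all_defect[OF ord p p2 this]
    show "sY T R P S v > R \<and> sX T R P S v < R"
      using payoffs_by_coeff_sign(2)[OF payoffs(1,2) p2 payoffs(3) dd] by simp
  qed simp
qed

theorem corollary2p2:
  fixes T R P S :: real and p :: mem1
  assumes "T > R" and "R > P" and "P > S" and "2 * R > T + S"
    and "valid_mem1 p" and "agreeable p" and "fst (snd p) < 1"
  shows "(good T R P S p \<longrightarrow>
            (\<forall>q x0 y0 v. valid_mem1 q \<longrightarrow> \<not> agreeable q \<longrightarrow>
               limit_dist x0 p (mem1_pattern y0 q) v \<longrightarrow> sY T R P S v < R))
       \<and> (\<not> good T R P S p \<longrightarrow>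
            (\<exists>q \<in> {(0, 0, 0, 0), (0, 1, 1, 1)}. \<forall>x0 y0 v.
               limit_dist x0 p (mem1_pattern y0 q) v \<longrightarrow>
               sY T R P S v \<ge> R \<and> sX T R P S v < R))
       \<and> (\<not> nash_type T R P S p \<longrightarrow>
            (\<exists>q \<in> {(0, 0, 0, 0), (0, 1, 1, 1)}. \<forall>x0 y0 v.
               limit_dist x0 p (mem1_pattern y0 q) v \<longrightarrow>
               sY T R P S v > R \<and> sX T R P S v < R))"
proof -
  obtain p2 p3 p4 where p_eq: "p = (1, p2, p3, p4)"
    using \<open>agreeable p\<close> unfolding agreeable_def by (cases p) auto
  have p: "valid_mem1 (1, p2, p3, p4)" and p2: "p2 < 1"
    using \<open>valid_mem1 p\<close> \<open>fst (snd p) < 1\<close> by (simp_all add: p_eq)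
  note ord = \<open>R > P\<close> \<open>2 * R > T + S\<close>
  show ?thesis
    using good_punishes_non_agreeable[OF ord _ \<open>valid_mem1 p\<close>]
      not_good_exploitable[OF ord p p2] not_nash_type_exploitable[OF ord p p2]
    by (simp add: p_eq)
qed

end
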